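(* Let $d\le r$, $G\in\mathbb{R}^{r\times d}$, $Y\in\mathbb{R}^{r\times d}$ with $Y^\top Y=I_d$, and $A = \tfrac12(G^\top Y + Y^\top G)$. Then $$\mathrm{tr}(A)^2 - \|A\|_F^2 \le \|G\|_*^2 - \|G\|_F^2,$$ where $\|\cdot\|_*$ is the nuclear norm and $\|\cdot\|_F$ the Frobenius norm. *)

theory Defs
  imports "HOL-Analysis.Analysis"
begin

text \<open>Real r x d matrices are modelled as real^'d^'r (rows indexed by 'r, columns by 'd).\<close>

definition diag_mat :: "('n::finite \<Rightarrow> real) \<Rightarrow> real^'n^'n" where
  "diag_mat s = (\<chi> i j. if i = j then s i else 0)"

text \<open>sigma is a family of singular values of G (indexed by the column index type):
  they are nonnegative and their squares are the eigenvalues (with multiplicity) of G^T G,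
  i.e. G^T G = V diag(sigma^2) V^T for an orthogonal V.\<close>
definition is_singular_values :: "real^'d::finite^'r::finite \<Rightarrow> ('d \<Rightarrow> real) \<Rightarrow> bool" where
  "is_singular_values G s \<longleftrightarrow> (\<forall>i. 0 \<le> s i) \<and>
     (\<exists>V. orthogonal_matrix V \<and>
          transpose G ** G = V ** diag_mat (\<lambda>i. (s i)^2) ** transpose V)"

definition singular_values :: "real^'d::finite^'r::finite \<Rightarrow> 'd \<Rightarrow> real" where
  "singular_values G = (SOME s. is_singular_values G s)"

definition nuclear_norm :: "real^'d::finite^'r::finite \<Rightarrow> real" where
  "nuclear_norm G = (\<Sum>i\<in>UNIV. singular_values G i)"

definition frob_norm :: "real^'d::finite^'r::finite \<Rightarrow> real" where
  "frob_norm G = sqrt (\<Sum>i\<in>UNIV. \<Sum>j\<in>UNIV. (G $ i $ j)^2)"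

end

theory Submission
  imports Defs
begin

text \<open>Diagonalise \<open>G\<^sup>T G = V diag(\<sigma>\<^sup>2) V\<^sup>T\<close> and conjugate \<open>A\<close> by the orthogonal \<open>V\<close>; this
  changes neither \<open>tr A\<close> nor \<open>\<parallel>A\<parallel>\<^sub>F\<close>. The \<open>i\<close>-th diagonal entry of \<open>V\<^sup>T A V\<close> is
  \<open>\<langle>G v\<^sub>i, Y v\<^sub>i\<rangle>\<close> for the \<open>i\<close>-th column \<open>v\<^sub>i\<close> of \<open>V\<close>, so by Cauchy-Schwarz it is bounded by
  \<open>\<parallel>G v\<^sub>i\<parallel> \<parallel>Y v\<^sub>i\<parallel> = \<sigma>\<^sub>i\<close>. Dropping the off-diagonal entries of \<open>\<parallel>A\<parallel>\<^sub>F\<^sup>2\<close>, the left-hand side is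
  at most \<open>(\<Sum> a\<^sub>i)\<^sup>2 - \<Sum> a\<^sub>i\<^sup>2 = \<Sum>\<^sub>i\<^sub>\<noteq>\<^sub>j a\<^sub>i a\<^sub>j\<close> for the diagonal entries \<open>a\<^sub>i\<close>, which is monotone
  in the \<open>|a\<^sub>i|\<close>. The existence of singular values needs the spectral theorem for real
  symmetric matrices, proved here by maximising the Rayleigh quotient.\<close>

lemma inner_transpose_matrix_vector:
  fixes A :: "real^'n^'m"
  shows "x \<bullet> (transpose A *v y) = (A *v x) \<bullet> y"
  by (metis dot_lmul_matrix inner_commute transpose_matrix_vector)

lemma transpose_conj_entry:
  fixes V :: "real^'k^'n" and B :: "real^'n^'n"
  shows "(transpose V ** B ** V) $ i $ j = column i V \<bullet> (B *v column j V)"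
  by (simp add: matrix_matrix_mult_def matrix_vector_mult_def inner_vec_def column_def
      transpose_def sum_distrib_left sum_distrib_right mult_ac,
      subst sum.swap, simp add: mult_ac)

lemma norm_mult_sq_eq_inner_gram:
  fixes A :: "real^'n^'m"
  shows "(norm (A *v x))^2 = x \<bullet> ((transpose A ** A) *v x)"
  unfolding matrix_vector_mul_assoc[symmetric] inner_transpose_matrix_vector
  by (simp add: power2_norm_eq_inner)

lemma norm_isometry_mult:
  fixes Y :: "real^'n^'m"
  assumes "transpose Y ** Y = mat 1"
  shows "norm (Y *v x) = norm x"
  using norm_mult_sq_eq_inner_gram[of Y x] assms
  by (simp add: power2_norm_eq_inner[symmetric] power2_eq_iff_nonneg)

lemma orthogonal_matrix_conj_cancel:
  fixes V D :: "real^'n^'n"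
  assumes "orthogonal_matrix V"
  shows "transpose V ** (V ** D ** transpose V) ** V = D"
proof -
  have "transpose V ** (V ** D ** transpose V) ** V = (transpose V ** V) ** D ** (transpose V ** V)"
    by (simp add: matrix_mul_assoc)
  then show ?thesis using assms by (simp add: orthogonal_matrix)
qed

lemma frob_norm_sq_eq_trace: "(frob_norm X)^2 = trace (transpose X ** X)"
proof -
  have "(frob_norm X)^2 = (\<Sum>i\<in>UNIV. \<Sum>j\<in>UNIV. (X $ i $ j)^2)"
    unfolding frob_norm_def by (simp add: sum_nonneg)
  also have "\<dots> = (\<Sum>j\<in>UNIV. \<Sum>i\<in>UNIV. (X $ i $ j)^2)" by (rule sum.swap)
  also have "\<dots> = trace (transpose X ** X)"
    by (simp add: trace_def matrix_matrix_mult_def transpose_def power2_eq_square)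
  finally show ?thesis .
qed

lemma sum_diag_squares_le_frob_norm_sq:
  "(\<Sum>i\<in>UNIV. (A $ i $ i)^2) \<le> (frob_norm (A :: real^'n^'n))^2"
proof -
  have "(\<Sum>i\<in>UNIV. (A $ i $ i)^2) \<le> (\<Sum>i\<in>UNIV. \<Sum>j\<in>UNIV. (A $ i $ j)^2)"
    by (intro sum_mono member_le_sum) auto
  also have "\<dots> = (frob_norm A)^2"
    unfolding frob_norm_def by (simp add: sum_nonneg)
  finally show ?thesis .
qed

lemma trace_orthogonal_conj:
  fixes A V :: "real^'n^'n"
  assumes "orthogonal_matrix V"
  shows "trace (transpose V ** A ** V) = trace A"
proof -
  have "trace (transpose V ** A ** V) = trace (A ** V ** transpose V)"
    by (metis matrix_mul_assoc trace_mul_sym)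
  also have "\<dots> = trace A"
    using assms by (simp add: matrix_mul_assoc[symmetric] orthogonal_matrix_def)
  finally show ?thesis .
qed

lemma frob_norm_orthogonal_conj:
  fixes A V :: "real^'n^'n"
  assumes "orthogonal_matrix V"
  shows "frob_norm (transpose V ** A ** V) = frob_norm A"
proof -
  have "transpose (transpose V ** A ** V) ** (transpose V ** A ** V)
      = transpose V ** transpose A ** (V ** transpose V) ** A ** V"
    by (simp add: matrix_transpose_mul matrix_mul_assoc)
  also have "\<dots> = transpose V ** (transpose A ** A) ** V"
    using assms by (simp add: matrix_mul_assoc orthogonal_matrix_def)
  finally have "(frob_norm (transpose V ** A ** V))^2 = (frob_norm A)^2"
    using assms by (simp add: frob_norm_sq_eq_trace trace_orthogonal_conj)
  then show ?thesis unfolding frob_norm_def by (simp add: sum_nonneg)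
qed

lemma sum_square_minus_sum_squares_le:
  fixes a s :: "'i \<Rightarrow> real"
  assumes "finite I" and "\<And>i. i \<in> I \<Longrightarrow> \<bar>a i\<bar> \<le> s i"
  shows "(\<Sum>i\<in>I. a i)^2 - (\<Sum>i\<in>I. (a i)^2) \<le> (\<Sum>i\<in>I. s i)^2 - (\<Sum>i\<in>I. (s i)^2)"
proof -
  have off_diagonal: "(\<Sum>i\<in>I. f i)^2 - (\<Sum>i\<in>I. (f i)^2)
      = (\<Sum>i\<in>I. \<Sum>j\<in>I. (if i = j then 0 else f i * f j))" for f :: "'i \<Rightarrow> real"
  proof -
    have "(\<Sum>i\<in>I. f i)^2 = (\<Sum>i\<in>I. \<Sum>j\<in>I. f i * f j)"
      by (simp add: power2_eq_square sum_product)
    moreover have "(\<Sum>i\<in>I. (f i)^2) = (\<Sum>i\<in>I. \<Sum>j\<in>I. (if i = j then f i * f j else 0))"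
      using assms(1) by (simp add: power2_eq_square)
    ultimately show ?thesis
      by (simp add: sum_subtractf[symmetric] if_distrib cong: if_cong)
  qed
  have "a i * a j \<le> s i * s j" if "i \<in> I" "j \<in> I" for i j
  proof -
    have "a i * a j \<le> \<bar>a i\<bar> * \<bar>a j\<bar>" by (metis abs_ge_self abs_mult)
    also have "\<dots> \<le> s i * s j" using assms(2) that by (simp add: mult_mono')
    finally show ?thesis .
  qed
  then show ?thesis unfolding off_diagonal by (intro sum_mono) auto
qed

subsection \<open>The spectral theorem for real symmetric matrices\<close>

lemma linear_coeff_zero_if_quadratic_nonpos:
  fixes a b :: real
  assumes "\<And>t. 2*t*a + t^2*b \<le> 0"
  shows "a = 0"
proof -
  define c where "c = \<bar>b\<bar> + 1"
  have c: "c > 0" "2*c + b \<ge> 2" unfolding c_def by auto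
  have "2*(a/c)*a + (a/c)^2*b \<le> 0" using assms .
  then have "(2*(a/c)*a + (a/c)^2*b) * c^2 \<le> 0"
    by (simp add: mult_nonpos_nonneg)
  moreover have "(2*(a/c)*a + (a/c)^2*b) * c^2 = a^2 * (2*c + b)"
    using c by (simp add: field_simps power2_eq_square)
  ultimately have "a^2 * (2*c+b) \<le> 0" by simp
  with c have "a^2 \<le> 0"
    by (smt (verit) mult_le_0_iff zero_le_power2)
  then show ?thesis by simp
qed

text \<open>The Rayleigh quotient along \<open>v + t w\<close> is maximal at \<open>t = 0\<close>, so the linear
  coefficient \<open>2 \<langle>w, M v\<rangle>\<close> of its numerator must vanish.\<close>

lemma symmetric_rayleigh_max_orthogonal:
  fixes M :: "real^'n^'n"
  assumes sym: "transpose M = M" and S: "subspace S"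
    and vS: "v \<in> S" and vn: "norm v = 1"
    and max: "\<And>y. y \<in> S \<Longrightarrow> norm y = 1 \<Longrightarrow> y \<bullet> (M *v y) \<le> v \<bullet> (M *v v)"
    and wS: "w \<in> S" and wv: "w \<bullet> v = 0"
  shows "w \<bullet> (M *v v) = 0"
proof (rule linear_coeff_zero_if_quadratic_nonpos)
  fix t :: real
  define l where "l = v \<bullet> (M *v v)"
  define x where "x = v + t *\<^sub>R w"
  have xS: "x \<in> S" unfolding x_def using wS vS S
    by (simp add: subspace_add subspace_scale)
  have xx: "x \<bullet> x = 1 + t^2 * (w \<bullet> w)"
    unfolding x_def using vn wv
    by (simp add: inner_add_left inner_add_right inner_commute power2_eq_square norm_eq_1)
  then have "x \<bullet> x > 0" by (simp add: add_pos_nonneg)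
  then have nx: "norm x > 0" by simp
  have "(x /\<^sub>R norm x) \<bullet> (M *v (x /\<^sub>R norm x)) \<le> l"
    unfolding l_def using xS nx S by (intro max) (simp_all add: subspace_scale)
  moreover have "(x /\<^sub>R norm x) \<bullet> (M *v (x /\<^sub>R norm x)) = (x \<bullet> (M *v x)) / (norm x)^2"
    by (simp add: matrix_vector_mult_scaleR power2_eq_square divide_inverse)
  ultimately have quot: "x \<bullet> (M *v x) \<le> l * (x \<bullet> x)" using nx
    by (simp add: divide_le_eq power2_norm_eq_inner)
  have "v \<bullet> (M *v w) = w \<bullet> (M *v v)"
    using inner_transpose_matrix_vector[of v M w] sym by (simp add: inner_commute)
  then have "x \<bullet> (M *v x) = l + 2*t*(w \<bullet> (M *v v)) + t^2 * (w \<bullet> (M *v w))"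
    unfolding x_def l_def
    by (simp add: matrix_vector_right_distrib matrix_vector_mult_scaleR inner_add_left
        inner_add_right power2_eq_square algebra_simps)
  with quot xx show "2*t*(w \<bullet> (M *v v)) + t^2 * (w \<bullet> (M *v w) - l * (w \<bullet> w)) \<le> 0"
    by (simp add: algebra_simps)
qed

lemma symmetric_rayleigh_max_is_eigenvector:
  fixes M :: "real^'n^'n"
  assumes sym: "transpose M = M" and S: "subspace S"
    and inv: "\<And>x. x \<in> S \<Longrightarrow> M *v x \<in> S"
    and vS: "v \<in> S" and vn: "norm v = 1"
    and max: "\<And>y. y \<in> S \<Longrightarrow> norm y = 1 \<Longrightarrow> y \<bullet> (M *v y) \<le> v \<bullet> (M *v v)"
  shows "M *v v = (v \<bullet> (M *v v)) *\<^sub>R v"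
proof -
  define u where "u = M *v v - (v \<bullet> (M *v v)) *\<^sub>R v"
  have uS: "u \<in> S" unfolding u_def using S inv vS by (simp add: subspace_diff subspace_scale)
  have uv: "u \<bullet> v = 0"
    unfolding u_def using vn by (simp add: inner_diff_left inner_diff_right inner_commute norm_eq_1)
  have "u \<bullet> u = 0"
    using symmetric_rayleigh_max_orthogonal[OF sym S vS vn max uS uv] uv
    unfolding u_def by (simp add: inner_diff_right inner_diff_left inner_commute)
  then show ?thesis unfolding u_def by simp
qed

lemma symmetric_invariant_subspace_has_unit_eigenvector:
  fixes M :: "real^'n^'n"
  assumes sym: "transpose M = M" and S: "subspace S"
    and inv: "\<And>x. x \<in> S \<Longrightarrow> M *v x \<in> S" and nontriv: "S \<noteq> {0}"
  shows "\<exists>v c. v \<in> S \<and> norm v = 1 \<and> M *v v = c *\<^sub>R v"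
proof -
  let ?K = "S \<inter> sphere 0 1"
  obtain z where z: "z \<in> S" "z \<noteq> 0" using nontriv subspace_0[OF S] by blast
  then have "z /\<^sub>R norm z \<in> ?K" using S by (simp add: subspace_scale)
  then have "?K \<noteq> {}" by auto
  moreover have "compact ?K"
    using closed_subspace[OF S] by (metis Int_commute compact_Int_closed compact_sphere)
  moreover have "continuous_on ?K (\<lambda>x. x \<bullet> (M *v x))"
    by (intro continuous_intros linear_continuous_on) (simp add: linear_conv_bounded_linear[symmetric])
  ultimately obtain v where "v \<in> ?K" and "\<forall>y\<in>?K. y \<bullet> (M *v y) \<le> v \<bullet> (M *v v)"
    using continuous_attains_sup by blast
  then show ?thesis
    using symmetric_rayleigh_max_is_eigenvector[OF sym S inv, of v] by auto
qed

lemma subspace_subset_span_insert: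
  fixes v :: "'a::real_inner"
  assumes S: "subspace S" and vS: "v \<in> S" and vv: "v \<bullet> v = 1"
    and "{x \<in> S. x \<bullet> v = 0} \<subseteq> span B"
  shows "S \<subseteq> span (insert v B)"
proof
  fix x assume x: "x \<in> S"
  have "x - (x \<bullet> v) *\<^sub>R v \<in> span B"
    using assms x by (auto simp: subspace_diff subspace_scale inner_diff_left)
  then have "x - (x \<bullet> v) *\<^sub>R v \<in> span (insert v B)"
    by (meson span_mono subset_insertI subsetD)
  moreover have "(x \<bullet> v) *\<^sub>R v \<in> span (insert v B)" by (simp add: span_base span_scale)
  ultimately have "x - (x \<bullet> v) *\<^sub>R v + (x \<bullet> v) *\<^sub>R v \<in> span (insert v B)"
    by (rule span_add)
  then show "x \<in> span (insert v B)" by simp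
qed

lemma symmetric_invariant_subspace_orthonormal_eigenbasis:
  fixes M :: "real^'n^'n"
  assumes sym: "transpose M = M"
  shows "subspace S \<Longrightarrow> (\<And>x. x \<in> S \<Longrightarrow> M *v x \<in> S) \<Longrightarrow>
    \<exists>B. finite B \<and> B \<subseteq> S \<and> pairwise orthogonal B \<and> S \<subseteq> span B \<and>
        (\<forall>x\<in>B. norm x = 1 \<and> (\<exists>c. M *v x = c *\<^sub>R x))"
proof (induction "dim S" arbitrary: S rule: less_induct)
  case less
  show ?case
  proof (cases "S = {0}")
    case True
    then show ?thesis by (intro exI[of _ "{}"]) auto
  next
    case False
    then obtain v c where vS: "v \<in> S" and vn: "norm v = 1" and eig: "M *v v = c *\<^sub>R v"
      using symmetric_invariant_subspace_has_unit_eigenvector[OF sym less.prems] by blast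
    have vv: "v \<bullet> v = 1" using vn by (simp add: norm_eq_1)
    define S' where "S' = {x \<in> S. x \<bullet> v = 0}"
    have sub': "subspace S'" unfolding S'_def using less.prems(1)
      by (auto simp: subspace_def inner_add_left)
    have inv': "M *v x \<in> S'" if x: "x \<in> S'" for x
    proof -
      have "(M *v x) \<bullet> v = x \<bullet> (M *v v)"
        using inner_transpose_matrix_vector[of x M v] sym by simp
      also have "\<dots> = 0" using x eig by (simp add: S'_def)
      finally show ?thesis using x less.prems(2) by (simp add: S'_def)
    qed
    have "S' \<subset> S" using vS vv unfolding S'_def
      by (metis (mono_tags, lifting) mem_Collect_eq psubsetI subsetI zero_neq_one)
    then have "span S' \<subset> span S" using sub' less.prems(1) by (metis real_vector.span_eq_iff)
    then have "dim S' < dim S" by (rule dim_psubset)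
    then obtain B' where B': "finite B'" "B' \<subseteq> S'" "pairwise orthogonal B'" "S' \<subseteq> span B'"
       "\<forall>x\<in>B'. norm x = 1 \<and> (\<exists>c. M *v x = c *\<^sub>R x)"
      using less.hyps[OF _ sub' inv'] by blast
    show ?thesis
    proof (intro exI[of _ "insert v B'"] conjI)
      show "finite (insert v B')" "insert v B' \<subseteq> S" using B' vS unfolding S'_def by auto
      show "\<forall>x\<in>insert v B'. norm x = 1 \<and> (\<exists>c. M *v x = c *\<^sub>R x)" using B' vn eig by auto
      show "pairwise orthogonal (insert v B')"
        using B'(2,3) unfolding S'_def by (auto simp: pairwise_insert orthogonal_def inner_commute)
      show "S \<subseteq> span (insert v B')"
        using subspace_subset_span_insert[OF less.prems(1) vS vv] B'(4) unfolding S'_def .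
    qed
  qed
qed

lemma symmetric_matrix_orthogonally_diagonalizable:
  fixes M :: "real^'n^'n"
  assumes sym: "transpose M = M"
  shows "\<exists>V lam. orthogonal_matrix V \<and> M = V ** diag_mat lam ** transpose V"
proof -
  obtain B where B: "finite B" "pairwise orthogonal B" "UNIV \<subseteq> span B"
    "\<forall>x\<in>B. norm x = 1 \<and> (\<exists>c. M *v x = c *\<^sub>R x)"
    using symmetric_invariant_subspace_orthonormal_eigenbasis[OF sym subspace_UNIV UNIV_I] by blast
  have "0 \<notin> B" using B(4) by force
  then have "independent B" using B(2) pairwise_orthogonal_independent by blast
  then have "card B = dim (span B)" by (rule dim_span_eq_card_independent[symmetric])
  also have "span B = UNIV" using B(3) by auto
  finally have "card B = CARD('n)" by simp
  then obtain e where e: "bij_betw e (UNIV :: 'n set) B"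
    using finite_same_card_bij[of "UNIV::'n set" B] B(1) by auto
  have eB: "e j \<in> B" for j using e by (auto simp: bij_betw_def)
  have e_inj: "e i = e j \<Longrightarrow> i = j" for i j using e by (auto simp: bij_betw_def inj_def)
  define lam where "lam j = (SOME c. M *v e j = c *\<^sub>R e j)" for j
  have eig: "M *v e j = lam j *\<^sub>R e j" for j
    unfolding lam_def using B(4) eB[of j] by (metis (mono_tags, lifting) someI_ex)
  define V :: "real^'n^'n" where "V = (\<chi> i j. e j $ i)"
  have col: "column j V = e j" for j by (simp add: V_def column_def vec_eq_iff)
  have orth: "orthogonal_matrix V"
    unfolding orthogonal_matrix_orthonormal_columns col
  proof (intro conjI allI impI)
    show "norm (e i) = 1" for i using B(4) eB by blast
    show "orthogonal (e i) (e j)" if "i \<noteq> j" for i j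
      using B(2) eB[of i] eB[of j] e_inj[of i j] that by (auto simp: pairwise_def)
  qed
  have "(M ** V) $ i $ j = (V ** diag_mat lam) $ i $ j" for i j
  proof -
    have "(M ** V) $ i $ j = (M *v e j) $ i"
      by (simp add: matrix_matrix_mult_def matrix_vector_mult_def V_def)
    also have "\<dots> = (V ** diag_mat lam) $ i $ j"
      by (simp add: eig matrix_matrix_mult_def diag_mat_def V_def if_distrib cong: if_cong)
    finally show ?thesis .
  qed
  then have MV: "M ** V = V ** diag_mat lam" by (simp add: vec_eq_iff)
  have "M = M ** (V ** transpose V)" using orth by (simp add: orthogonal_matrix_def)
  also have "\<dots> = V ** diag_mat lam ** transpose V" by (simp add: matrix_mul_assoc MV)
  finally have "M = V ** diag_mat lam ** transpose V" .
  with orth show ?thesis by (intro exI[of _ V] exI[of _ lam] conjI)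
qed

subsection \<open>Singular values\<close>

lemma is_singular_values_singular_values: "is_singular_values G (singular_values G)"
proof -
  have "transpose (transpose G ** G) = transpose G ** G" by (simp add: matrix_transpose_mul)
  then obtain V lam where V: "orthogonal_matrix V"
      and GG: "transpose G ** G = V ** diag_mat lam ** transpose V"
    using symmetric_matrix_orthogonally_diagonalizable by blast
  have lam_nonneg: "lam j \<ge> 0" for j
  proof -
    have "lam j = (transpose V ** (transpose G ** G) ** V) $ j $ j"
      by (simp add: GG orthogonal_matrix_conj_cancel[OF V] diag_mat_def)
    also have "\<dots> = (norm (G *v column j V))^2"
      by (simp only: transpose_conj_entry norm_mult_sq_eq_inner_gram)
    finally show ?thesis by simp
  qed
  have "is_singular_values G (\<lambda>j. sqrt (lam j))"
    unfolding is_singular_values_def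
  proof (intro conjI allI exI)
    show "0 \<le> sqrt (lam i)" for i by (simp add: lam_nonneg)
    show "transpose G ** G = V ** diag_mat (\<lambda>i. (sqrt (lam i))^2) ** transpose V"
      using GG lam_nonneg by simp
  qed (rule V)
  then show ?thesis unfolding singular_values_def by (rule someI[of "is_singular_values G"])
qed

lemma frob_norm_sq_eq_sum_singular_values_sq:
  assumes "is_singular_values G s"
  shows "(frob_norm G)^2 = (\<Sum>i\<in>UNIV. (s i)^2)"
proof -
  obtain V where V: "orthogonal_matrix V"
    and GG: "transpose G ** G = V ** diag_mat (\<lambda>i. (s i)^2) ** transpose V"
    using assms unfolding is_singular_values_def by blast
  have "(frob_norm G)^2 = trace (V ** diag_mat (\<lambda>i. (s i)^2) ** transpose V)"
    by (simp add: frob_norm_sq_eq_trace GG)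
  also have "\<dots> = trace (diag_mat (\<lambda>i. (s i)^2))"
    using trace_orthogonal_conj[of "transpose V"] V by simp
  finally show ?thesis by (simp add: diag_mat_def trace_def)
qed

lemma norm_mult_singular_vector:
  assumes V: "orthogonal_matrix V"
    and GG: "transpose G ** G = V ** diag_mat (\<lambda>i. (s i)^2) ** transpose V"
    and "0 \<le> s i"
  shows "norm (G *v column i V) = s i"
proof -
  have "(norm (G *v column i V))^2 = (transpose V ** (transpose G ** G) ** V) $ i $ i"
    by (simp only: transpose_conj_entry norm_mult_sq_eq_inner_gram)
  also have "\<dots> = (s i)^2"
    by (simp add: GG orthogonal_matrix_conj_cancel[OF V] diag_mat_def)
  finally show ?thesis using \<open>0 \<le> s i\<close> by (simp add: power2_eq_iff_nonneg)
qed

lemma symmetrized_product_conj_diag_le: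
  fixes G Y :: "real^'d::finite^'r::finite"
  assumes V: "orthogonal_matrix V"
    and GG: "transpose G ** G = V ** diag_mat (\<lambda>i. (s i)^2) ** transpose V"
    and "0 \<le> s i" and Y: "transpose Y ** Y = mat 1"
  shows "\<bar>(transpose V ** ((1/2) *\<^sub>R (transpose G ** Y + transpose Y ** G)) ** V) $ i $ i\<bar> \<le> s i"
proof -
  define v where "v = column i V"
  have "(transpose V ** ((1/2) *\<^sub>R (transpose G ** Y + transpose Y ** G)) ** V) $ i $ i
      = (1/2) * (v \<bullet> (transpose G *v (Y *v v)) + v \<bullet> (transpose Y *v (G *v v)))"
    by (simp add: transpose_conj_entry v_def matrix_vector_mult_add_rdistrib
        matrix_vector_mul_assoc scaleR_matrix_vector_assoc[symmetric] inner_add_right)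
  also have "\<dots> = (G *v v) \<bullet> (Y *v v)"
    unfolding inner_transpose_matrix_vector by (simp add: inner_commute)
  also have "\<bar>\<dots>\<bar> \<le> norm (G *v v) * norm (Y *v v)" by (rule Cauchy_Schwarz_ineq2)
  also have "\<dots> = s i"
    using norm_mult_singular_vector[OF V GG \<open>0 \<le> s i\<close>] norm_isometry_mult[OF Y] V
    by (simp add: v_def orthogonal_matrix_orthonormal_columns)
  finally show ?thesis .
qed

theorem lemmaB3:
  fixes G Y :: "real^'d::finite^'r::finite" and A :: "real^'d^'d"
  assumes "CARD('d) \<le> CARD('r)"
    and "transpose Y ** Y = mat 1"
    and "A = (1/2) *\<^sub>R (transpose G ** Y + transpose Y ** G)"
  shows "(trace A)^2 - (frob_norm A)^2 \<le> (nuclear_norm G)^2 - (frob_norm G)^2"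
proof -
  let ?s = "singular_values G"
  obtain V where s_nonneg: "\<And>i. 0 \<le> ?s i" and V: "orthogonal_matrix V"
    and GG: "transpose G ** G = V ** diag_mat (\<lambda>i. (?s i)^2) ** transpose V"
    using is_singular_values_singular_values unfolding is_singular_values_def by blast
  define A' where "A' = transpose V ** A ** V"
  have "(trace A)^2 - (frob_norm A)^2 \<le> (\<Sum>i\<in>UNIV. A' $ i $ i)^2 - (\<Sum>i\<in>UNIV. (A' $ i $ i)^2)"
    using trace_orthogonal_conj[OF V, of A] frob_norm_orthogonal_conj[OF V, of A]
      sum_diag_squares_le_frob_norm_sq[of A']
    unfolding A'_def trace_def by simp
  also have "\<dots> \<le> (\<Sum>i\<in>UNIV. ?s i)^2 - (\<Sum>i\<in>UNIV. (?s i)^2)"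
    using symmetrized_product_conj_diag_le[OF V GG s_nonneg assms(2)] assms(3)
    unfolding A'_def by (intro sum_square_minus_sum_squares_le) auto
  finally show ?thesis
    unfolding nuclear_norm_def
      frob_norm_sq_eq_sum_singular_values_sq[OF is_singular_values_singular_values[of G]] .
qed

end
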